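(* Let $\mathcal{A}\subseteq\mathcal{P}_\infty(\mathbb{N})$ be a $C$-measurable M-family and let $\mathbf{C}=(C_n)_n$ be a sequence in $\mathcal{A}$ of pairwise disjoint sets. Then for every $N\in\mathcal{P}_\infty(\mathbb{N})$ there exists $L\in\mathcal{P}_\infty(N)$ such that $\Delta_{\mathbf{C}}(M)\in\mathcal{A}$ for all $M\in\mathcal{P}_\infty(L)$.
   Context: $\mathcal{P}_\infty(X)$: infinite subsets of $X$, topologized as a subspace of $2^X$. $C$-measurable: belonging to the smallest $\sigma$-algebra containing the open sets and closed under the Souslin operation. An M-family is a hereditary (closed under infinite subsets) family $\mathcal{A}$ such that for every sequence $(A_n)_n$ in $\mathcal{A}$ there is $A\in\mathcal{A}$ with $A\setminus\bigcup_{i\ge n}A_i$ finite for every $n$. For pairwise disjoint infinite $C_n$ with increasing enumerations $C_n=\{x^n_0<x^n_1<\cdots\}$, define $\Delta_{\mathbf{C}}:\mathcal{P}_\infty(\mathbb{N})\to\mathcal{P}_\infty(\mathbb{N})$ by $\Delta_{\mathbf{C}}(L)=\{x^{l_{2n}}_{l_{2n+1}}:n\in\mathbb{N}\}$, where $L=\{l_0<l_1<\cdots\}$. *)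

theory Defs
  imports "HOL-Analysis.Analysis"
begin

definition Pinf :: "'a set \<Rightarrow> 'a set set" where
  "Pinf X = {A. A \<subseteq> X \<and> infinite A}"

(* open subsets of P_infinity(nat), as a subspace of the Cantor space 2^nat
   (subsets of nat identified with their characteristic functions nat => bool,
    carrying the product topology of discrete bool) *)
definition Pinf_open :: "nat set set \<Rightarrow> bool" where
  "Pinf_open U \<longleftrightarrow>
     (\<exists>V :: (nat \<Rightarrow> bool) set. open V \<and> U = {A \<in> Pinf UNIV. (\<lambda>n. n \<in> A) \<in> V})"

definition souslin :: "(nat list \<Rightarrow> 'a set) \<Rightarrow> 'a set" where
  "souslin P = (\<Union>\<sigma> :: nat \<Rightarrow> nat. \<Inter>n. P (map \<sigma> [0..<Suc n]))"

inductive_set C_sets :: "'a set \<Rightarrow> ('a set \<Rightarrow> bool) \<Rightarrow> 'a set set"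
  for \<Omega> :: "'a set" and op :: "'a set \<Rightarrow> bool" where
  C_open: "op U \<Longrightarrow> U \<in> C_sets \<Omega> op"
| C_compl: "A \<in> C_sets \<Omega> op \<Longrightarrow> \<Omega> - A \<in> C_sets \<Omega> op"
| C_union: "(\<And>n::nat. A n \<in> C_sets \<Omega> op) \<Longrightarrow> (\<Union>n::nat. A n) \<in> C_sets \<Omega> op"
| C_souslin: "(\<And>s. P s \<in> C_sets \<Omega> op) \<Longrightarrow> souslin P \<in> C_sets \<Omega> op"

definition C_measurable :: "nat set set \<Rightarrow> bool" where
  "C_measurable \<A> \<longleftrightarrow> \<A> \<in> C_sets (Pinf UNIV) Pinf_open"

definition M_family :: "nat set set \<Rightarrow> bool" where
  "M_family \<A> \<longleftrightarrow>
     \<A> \<subseteq> Pinf UNIV \<and>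
     (\<forall>A\<in>\<A>. \<forall>B. B \<subseteq> A \<and> infinite B \<longrightarrow> B \<in> \<A>) \<and>
     (\<forall>As :: nat \<Rightarrow> nat set. (\<forall>n. As n \<in> \<A>) \<longrightarrow>
        (\<exists>A\<in>\<A>. \<forall>n. finite (A - (\<Union>i\<in>{n..}. As i))))"

(* Delta_C(L) = { x^{l_{2n}}_{l_{2n+1}} : n }, x^n_k the k-th element of C n *)
definition Delta :: "(nat \<Rightarrow> nat set) \<Rightarrow> nat set \<Rightarrow> nat set" where
  "Delta C L = range (\<lambda>n. Infinite_Set.enumerate (C (Infinite_Set.enumerate L (2*n)))
                                        (Infinite_Set.enumerate L (2*n+1)))"

end

theory Submission
  imports Defs
begin

(* Lemma 7 is a consequence of Ellentuck's theorem for the map Delta_C. *)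

definition nbhd :: "nat \<Rightarrow> nat set \<Rightarrow> nat set \<Rightarrow> nat set set" where
  "nbhd m t B = {Z. infinite Z \<and> Z \<inter> {..<m} = t \<and> Z \<inter> {m..} \<subseteq> B}"

definition completely_ramsey :: "nat set set \<Rightarrow> bool" where
  "completely_ramsey X \<longleftrightarrow>
     (\<forall>m t A. infinite A \<longrightarrow> (\<exists>B\<subseteq>A. infinite B \<and> (nbhd m t B \<subseteq> X \<or> nbhd m t B \<inter> X = {})))"

definition ramsey_null :: "nat set set \<Rightarrow> bool" where
  "ramsey_null X \<longleftrightarrow> (\<forall>m t A. infinite A \<longrightarrow> (\<exists>B\<subseteq>A. infinite B \<and> nbhd m t B \<inter> X = {}))"

definition ellentuck_open :: "nat set set \<Rightarrow> bool" where
  "ellentuck_open X \<longleftrightarrow> (\<forall>Z\<in>X. \<exists>m t B. Z \<in> nbhd m t B \<and> nbhd m t B \<subseteq> X)"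

lemma nbhd_mono: "B' \<subseteq> B \<Longrightarrow> nbhd m t B' \<subseteq> nbhd m t B"
  unfolding nbhd_def by auto

lemma nbhd_subset_Pinf: "nbhd m t B \<subseteq> Pinf UNIV"
  unfolding nbhd_def Pinf_def by auto

lemma nbhd_empty_stem: "nbhd 0 {} B = Pinf B"
  unfolding nbhd_def Pinf_def by auto

lemma nbhd_restart:
  assumes "Z \<in> nbhd m t B" "m \<le> n" "Z \<inter> {n..} \<subseteq> D"
  shows "Z \<in> nbhd n (Z \<inter> {..<n}) D"
  using assms unfolding nbhd_def by auto

lemma nbhd_refine:
  assumes "Z \<in> nbhd m t B" "m \<le> n" "D \<subseteq> B"
  shows "nbhd n (Z \<inter> {..<n}) D \<subseteq> nbhd m t B"
proof
  fix W assume "W \<in> nbhd n (Z \<inter> {..<n}) D"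
  then have W: "infinite W" "W \<inter> {..<n} = Z \<inter> {..<n}" "W \<inter> {n..} \<subseteq> D"
    unfolding nbhd_def by auto
  have "W \<inter> {..<n} \<inter> {..<m} = Z \<inter> {..<n} \<inter> {..<m}" using W(2) by simp
  moreover have "{..<n} \<inter> {..<m} = {..<m}" using \<open>m \<le> n\<close> by auto
  ultimately have "W \<inter> {..<m} = Z \<inter> {..<m}" by (simp add: Int_assoc)
  moreover have "W \<inter> {m..} \<subseteq> B"
  proof
    fix x assume "x \<in> W \<inter> {m..}"
    then show "x \<in> B"
      using W(2,3) assms(1,3) unfolding nbhd_def by (cases "x < n") auto
  qed
  ultimately show "W \<in> nbhd m t B" using W(1) assms(1) unfolding nbhd_def by auto
qed

lemma infinite_Int_greaterThan: "infinite (A::nat set) \<Longrightarrow> infinite (A \<inter> {b<..})"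
proof -
  assume "infinite A"
  then have "infinite (A - {..b})" by (simp add: Diff_infinite_finite)
  moreover have "A - {..b} = A \<inter> {b<..}" by auto
  ultimately show ?thesis by simp
qed

lemma infinite_Int_atLeast: "infinite (A::nat set) \<Longrightarrow> infinite (A \<inter> {b..})"
proof -
  assume "infinite A"
  then have "infinite (A - {..<b})" by (simp add: Diff_infinite_finite)
  moreover have "A - {..<b} = A \<inter> {b..}" by auto
  ultimately show ?thesis by simp
qed

(* B is the sequence of minima of a decreasing chain of shrinkings. *)
lemma fusion:
  fixes Q :: "nat \<Rightarrow> nat set \<Rightarrow> bool"
  assumes dense: "\<And>m A. infinite A \<Longrightarrow> \<exists>C\<subseteq>A. infinite C \<and> Q m C"
    and hered: "\<And>m C C'. Q m C \<Longrightarrow> C' \<subseteq> C \<Longrightarrow> infinite C' \<Longrightarrow> Q m C'"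
    and A: "infinite A"
  shows "\<exists>B\<subseteq>A. infinite B \<and> Q k B \<and> (\<forall>b\<in>B. Q (Suc b) (B \<inter> {b<..}))"
proof -
  define shrink where "shrink m X = (SOME C. C \<subseteq> X \<and> infinite C \<and> Q m C)" for m X
  have shrink: "shrink m X \<subseteq> X \<and> infinite (shrink m X) \<and> Q m (shrink m X)" if "infinite X" for m X
    unfolding shrink_def using someI_ex[OF dense[OF that, of m]] by blast
  define F where "F = rec_nat (shrink k A)
     (\<lambda>_ X. shrink (Suc (LEAST x. x \<in> X)) (X \<inter> {(LEAST x. x \<in> X)<..}))"
  define b where "b j = (LEAST x. x \<in> F j)" for j
  have F_Suc: "F (Suc j) = shrink (Suc (b j)) (F j \<inter> {b j<..})" for j
    unfolding F_def b_def by simp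
  have F_0: "F 0 \<subseteq> A \<and> infinite (F 0) \<and> Q k (F 0)"
    using shrink[OF A] by (simp add: F_def)
  have F_inf: "infinite (F j)" for j
    by (induction j) (use F_0 shrink infinite_Int_greaterThan F_Suc in auto)
  have b_in: "b j \<in> F j" for j
    unfolding b_def using F_inf[of j] by (metis LeastI ex_in_conv infinite_imp_nonempty)
  have F_step: "F (Suc j) \<subseteq> F j \<inter> {b j<..} \<and> Q (Suc (b j)) (F (Suc j))" for j
    using F_Suc shrink[OF infinite_Int_greaterThan[OF F_inf[of j]]] by simp
  have F_decr: "j \<le> i \<Longrightarrow> F i \<subseteq> F j" for i j
    by (induction i) (use F_step in \<open>auto simp: le_Suc_eq\<close>)
  have "strict_mono b"
    unfolding strict_mono_Suc_iff using b_in F_step by blast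
  define B where "B = range b"
  have B_F0: "B \<subseteq> F 0" unfolding B_def using b_in F_decr by blast
  have B_inf: "infinite B"
    unfolding B_def using \<open>strict_mono b\<close> strict_mono_imp_inj_on range_inj_infinite by blast
  have "Q (Suc x) (B \<inter> {x<..})" if "x \<in> B" for x
  proof -
    obtain j where j: "x = b j" using \<open>x \<in> B\<close> unfolding B_def by auto
    have "B \<inter> {x<..} \<subseteq> F (Suc j)"
    proof
      fix y assume "y \<in> B \<inter> {x<..}"
      then obtain i where i: "y = b i" "b j < b i" unfolding B_def j by auto
      then have "Suc j \<le> i" using \<open>strict_mono b\<close> by (simp add: strict_mono_less)
      then show "y \<in> F (Suc j)" using i b_in[of i] F_decr by blast
    qed
    then show ?thesis using hered F_step infinite_Int_greaterThan[OF B_inf] j by blast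
  qed
  moreover have "Q k B" using hered F_0 B_F0 B_inf by blast
  ultimately show ?thesis using B_F0 F_0 B_inf by blast
qed

lemma dense_finite_Ball:
  assumes dense: "\<And>i A. infinite A \<Longrightarrow> \<exists>C\<subseteq>A. infinite C \<and> Q i C"
    and hered: "\<And>i C C'. Q i C \<Longrightarrow> C' \<subseteq> C \<Longrightarrow> infinite C' \<Longrightarrow> Q i C'"
    and "finite T" "infinite A"
  shows "\<exists>C\<subseteq>A. infinite C \<and> (\<forall>i\<in>T. Q i C)"
  using \<open>finite T\<close> \<open>infinite A\<close>
proof (induction T arbitrary: A rule: finite_induct)
  case (insert i T)
  obtain C where C: "C \<subseteq> A" "infinite C" "\<forall>j\<in>T. Q j C" using insert by blast
  obtain C' where C': "C' \<subseteq> C" "infinite C'" "Q i C'" using dense[OF C(2)] by blast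
  have "Q j C'" if "j \<in> T" for j using hered[OF _ C'(1,2)] C(3) that by blast
  then show ?case using C(1) C'(1,2,3) by (intro exI[of _ C']) auto
qed blast

(* Fusion for properties indexed by stems: at each level there are only finitely many
   stems, so fusion applies to their conjunction. *)
lemma fusion_stems:
  fixes P :: "nat \<Rightarrow> nat set \<Rightarrow> nat set \<Rightarrow> bool"
  assumes dense: "\<And>m t A. infinite A \<Longrightarrow> \<exists>C\<subseteq>A. infinite C \<and> P m t C"
    and hered: "\<And>m t C C'. P m t C \<Longrightarrow> C' \<subseteq> C \<Longrightarrow> infinite C' \<Longrightarrow> P m t C'"
    and "infinite A"
  shows "\<exists>B\<subseteq>A. infinite B \<and> (\<forall>t\<subseteq>{..<k}. P k t B) \<and>
           (\<forall>b\<in>B. \<forall>t\<subseteq>{..b}. P (Suc b) t (B \<inter> {b<..}))"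
proof -
  define Q where "Q m C \<longleftrightarrow> (\<forall>t\<in>Pow {..<m}. P m t C)" for m C
  have dense_Q: "\<exists>C\<subseteq>A. infinite C \<and> Q m C" if "infinite A" for m A
  proof -
    have "finite (Pow {..<m})" by simp
    from dense_finite_Ball[of "P m", OF dense hered this that] show ?thesis
      unfolding Q_def .
  qed
  have hered_Q: "Q m C'" if "Q m C" "C' \<subseteq> C" "infinite C'" for m C C'
    unfolding Q_def
  proof
    fix t assume "t \<in> Pow {..<m}"
    then have "P m t C" using that(1) unfolding Q_def by blast
    then show "P m t C'" by (rule hered[OF _ that(2,3)])
  qed
  have "\<exists>B\<subseteq>A. infinite B \<and> Q k B \<and> (\<forall>b\<in>B. Q (Suc b) (B \<inter> {b<..}))"
    using dense_Q hered_Q \<open>infinite A\<close> by (rule fusion)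
  then show ?thesis unfolding Q_def Pow_def by (simp add: lessThan_Suc_atMost)
qed

(* Countable unions of Ramsey null families are Ramsey null: by fusion, after stem
   Z \<inter> {..b} the tail avoids the first b + 1 families. *)
lemma ramsey_null_UN:
  fixes N :: "nat \<Rightarrow> nat set set"
  assumes null: "\<And>n. ramsey_null (N n)"
  shows "ramsey_null (\<Union>n. N n)"
  unfolding ramsey_null_def
proof (intro allI impI)
  fix k s A assume "infinite (A::nat set)"
  define P where "P m t C \<longleftrightarrow> (\<forall>n\<in>{..m}. nbhd m t C \<inter> N n = {})" for m t C
  have dense: "\<exists>C\<subseteq>A'. infinite C \<and> P m t C" if "infinite A'" for m t A'
    unfolding P_def
  proof (rule dense_finite_Ball)
    show "\<exists>C\<subseteq>A. infinite C \<and> nbhd m t C \<inter> N n = {}" if "infinite A" for n A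
      using null that unfolding ramsey_null_def by blast
    show "nbhd m t C' \<inter> N n = {}" if "nbhd m t C \<inter> N n = {}" "C' \<subseteq> C" for n C C'
      using that nbhd_mono by blast
  qed (use that in auto)
  have hered: "P m t C'" if "P m t C" "C' \<subseteq> C" "infinite C'" for m t C C'
    using that(1) nbhd_mono[OF that(2)] unfolding P_def by blast
  have "\<exists>B\<subseteq>A. infinite B \<and> (\<forall>t\<subseteq>{..<k}. P k t B) \<and>
          (\<forall>b\<in>B. \<forall>t\<subseteq>{..b}. P (Suc b) t (B \<inter> {b<..}))"
    using dense hered \<open>infinite A\<close> by (rule fusion_stems)
  then obtain B where B: "B \<subseteq> A" "infinite B" "\<forall>b\<in>B. \<forall>t\<subseteq>{..b}. P (Suc b) t (B \<inter> {b<..})"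
    by blast
  have "Z \<notin> N n" if Z: "Z \<in> nbhd k s B" for Z n
  proof -
    have Z_inf: "infinite Z" and Z_tail: "Z \<inter> {k..} \<subseteq> B" using Z unfolding nbhd_def by auto
    obtain b where b: "b \<in> Z" "max k n \<le> b" using Z_inf infinite_nat_iff_unbounded_le by blast
    have "b \<in> B" using Z_tail b by auto
    have "Z \<inter> {Suc b..} \<subseteq> B \<inter> {b<..}" using Z_tail b(2) by auto
    then have "Z \<in> nbhd (Suc b) (Z \<inter> {..b}) (B \<inter> {b<..})"
      using nbhd_restart[OF Z, of "Suc b"] b(2) by (simp add: lessThan_Suc_atMost)
    moreover have "P (Suc b) (Z \<inter> {..b}) (B \<inter> {b<..})"
      using B(3) \<open>b \<in> B\<close> inf_le2[of Z "{..b}"] by blast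
    ultimately show ?thesis using b(2) unfolding P_def by auto
  qed
  then show "\<exists>B\<subseteq>A. infinite B \<and> nbhd k s B \<inter> (\<Union>n. N n) = {}" using B(1,2) by blast
qed

definition rejects :: "nat set set \<Rightarrow> nat \<Rightarrow> nat set \<Rightarrow> nat set \<Rightarrow> bool" where
  "rejects X m t B \<longleftrightarrow> (\<forall>C\<subseteq>B. infinite C \<longrightarrow> \<not> nbhd m t C \<subseteq> X)"

definition decides :: "nat set set \<Rightarrow> nat \<Rightarrow> nat set \<Rightarrow> nat set \<Rightarrow> bool" where
  "decides X m t B \<longleftrightarrow> nbhd m t B \<subseteq> X \<or> rejects X m t B"

lemma nbhd_first_element:
  assumes "Z \<in> nbhd m t C"
  obtains b where "b \<in> Z" "m \<le> b" "Z \<inter> {..b} = insert b t"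
proof -
  have Z: "infinite Z" "Z \<inter> {..<m} = t" using assms unfolding nbhd_def by auto
  obtain x where "x \<in> Z" "m \<le> x" using Z(1) by (meson infinite_nat_iff_unbounded_le)
  define b where "b = (LEAST x. x \<in> Z \<and> m \<le> x)"
  have b: "b \<in> Z" "m \<le> b" using LeastI[of "\<lambda>x. x \<in> Z \<and> m \<le> x"] \<open>x \<in> Z\<close> \<open>m \<le> x\<close>
    unfolding b_def by blast+
  have "x \<in> Z \<inter> {..<m}" if "x \<in> Z" "x < b" for x
    using that Least_le[of "\<lambda>x. x \<in> Z \<and> m \<le> x" x] unfolding b_def by (cases "m \<le> x") auto
  then have "Z \<inter> {..b} = insert b t" using b Z(2) by (auto simp: le_less)
  then show ?thesis using that b by blast
qed

lemma segment_cases: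
  fixes Z :: "nat set"
  assumes "y \<in> Z" "k \<le> y"
  obtains "Z \<inter> {..y} = insert y (Z \<inter> {..<k})"
    | y' where "y' \<in> Z" "k \<le> y'" "y' < y" "Z \<inter> {..y} = insert y (Z \<inter> {..y'})"
proof (cases "Z \<inter> {k..<y} = {}")
  case True
  have "x \<in> Z \<inter> {..<k}" if "x \<in> Z" "x < y" for x
    using that True by (cases "x < k") auto
  then have "Z \<inter> {..y} = insert y (Z \<inter> {..<k})" using assms by (auto simp: le_less)
  then show ?thesis by (rule that(1))
next
  case False
  define y' where "y' = Max (Z \<inter> {k..<y})"
  have y': "y' \<in> Z" "k \<le> y'" "y' < y"
    using Max_in[of "Z \<inter> {k..<y}"] False unfolding y'_def by auto
  have "x \<le> y'" if "x \<in> Z" "k \<le> x" "x < y" for x unfolding y'_def using that by simp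
  then have "x \<in> Z \<inter> {..y'}" if "x \<in> Z" "x < y" for x
    using that y' by (cases "k \<le> x") auto
  then have "Z \<inter> {..y} = insert y (Z \<inter> {..y'})" using assms y' by (auto simp: le_less)
  then show ?thesis using that(2) y' by blast
qed

definition decisive :: "nat set set \<Rightarrow> nat set \<Rightarrow> bool" where
  "decisive X B \<longleftrightarrow> (\<forall>b\<in>B. \<forall>t\<subseteq>{..b}. decides X (Suc b) t (B \<inter> {b<..}))"

lemma decisive_subset:
  assumes "infinite A"
  shows "\<exists>B\<subseteq>A. infinite B \<and> (\<forall>t\<subseteq>{..<k}. decides X k t B) \<and> decisive X B"
proof -
  have dense: "\<exists>C\<subseteq>A. infinite C \<and> decides X m t C" if "infinite A" for m t A
    using that unfolding decides_def rejects_def by blast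
  have hered: "decides X m t C'" if "decides X m t C" "C' \<subseteq> C" "infinite C'" for m t C C'
  proof (cases "nbhd m t C \<subseteq> X")
    case True
    then show ?thesis using nbhd_mono[OF that(2)] unfolding decides_def by blast
  next
    case False
    then have "rejects X m t C" using that(1) unfolding decides_def by blast
    then show ?thesis using that(2) unfolding decides_def rejects_def by blast
  qed
  have "\<exists>B\<subseteq>A. infinite B \<and> (\<forall>t\<subseteq>{..<k}. decides X k t B) \<and>
          (\<forall>b\<in>B. \<forall>t\<subseteq>{..b}. decides X (Suc b) t (B \<inter> {b<..}))"
    using dense hered assms by (rule fusion_stems)
  then show ?thesis unfolding decisive_def .
qed

(* If a decisive B rejects (m, t), then all but finitely many one-point extensions of
   t by elements of B are rejected as well; otherwise the extensions would accept a
   whole neighbourhood below t. *)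
lemma rejects_extensions_cofinite:
  assumes "decisive X B" and rej: "rejects X m t B" and t: "t \<subseteq> {..<m}"
  shows "finite {b\<in>B. m \<le> b \<and> \<not> rejects X (Suc b) (insert b t) B}"
proof (rule ccontr)
  define F where "F = {b\<in>B. m \<le> b \<and> \<not> rejects X (Suc b) (insert b t) B}"
  assume "infinite {b\<in>B. m \<le> b \<and> \<not> rejects X (Suc b) (insert b t) B}"
  then have "infinite F" unfolding F_def .
  have accepts: "nbhd (Suc b) (insert b t) (B \<inter> {b<..}) \<subseteq> X" if "b \<in> F" for b
  proof -
    have b: "b \<in> B" "m \<le> b" using that unfolding F_def by simp_all
    have "\<not> rejects X (Suc b) (insert b t) B" using that unfolding F_def by simp
    then obtain C where C: "C \<subseteq> B" "infinite C" "nbhd (Suc b) (insert b t) C \<subseteq> X"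
      unfolding rejects_def by auto
    have "nbhd (Suc b) (insert b t) (C \<inter> {b<..}) \<subseteq> X"
      using C(3) nbhd_mono[of "C \<inter> {b<..}" C] by blast
    moreover have "C \<inter> {b<..} \<subseteq> B \<inter> {b<..}" using C(1) by blast
    ultimately have "\<not> rejects X (Suc b) (insert b t) (B \<inter> {b<..})"
      using infinite_Int_greaterThan[OF C(2)] unfolding rejects_def by blast
    moreover have "insert b t \<subseteq> {..b}" using t b(2) by auto
    ultimately show ?thesis using \<open>decisive X B\<close> b(1) unfolding decisive_def decides_def by blast
  qed
  have "nbhd m t F \<subseteq> X"
  proof
    fix Z assume Z: "Z \<in> nbhd m t F"
    then obtain b where b: "b \<in> Z" "m \<le> b" "Z \<inter> {..b} = insert b t"
      by (rule nbhd_first_element)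
    have Z_tail: "Z \<inter> {m..} \<subseteq> F" using Z unfolding nbhd_def by auto
    then have "b \<in> F" using b by auto
    have "Z \<inter> {Suc b..} \<subseteq> B \<inter> {b<..}" using Z_tail b(2) unfolding F_def by auto
    then have "Z \<in> nbhd (Suc b) (Z \<inter> {..b}) (B \<inter> {b<..})"
      using nbhd_restart[OF Z, of "Suc b"] b(2) by (simp add: lessThan_Suc_atMost)
    then show "Z \<in> X" using accepts[OF \<open>b \<in> F\<close>] b(3) by auto
  qed
  moreover have "F \<subseteq> B" unfolding F_def by blast
  ultimately show False using rej \<open>infinite F\<close> unfolding rejects_def by blast
qed

definition propagates :: "nat set set \<Rightarrow> nat set \<Rightarrow> nat \<Rightarrow> nat set \<Rightarrow> nat set \<Rightarrow> bool" where
  "propagates X B m t C \<longleftrightarrow> (rejects X m t B \<and> t \<subseteq> {..<m} \<longrightarrow>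
      (\<forall>b\<in>C \<inter> B. m \<le> b \<longrightarrow> rejects X (Suc b) (insert b t) B))"

(* By the previous lemma, removing finitely many points makes rejection propagate. *)
lemma propagates_dense:
  assumes "decisive X B" "infinite A"
  shows "\<exists>C\<subseteq>A. infinite C \<and> propagates X B m t C"
proof (cases "rejects X m t B \<and> t \<subseteq> {..<m}")
  case True
  let ?F = "{b\<in>B. m \<le> b \<and> \<not> rejects X (Suc b) (insert b t) B}"
  have "finite ?F" using rejects_extensions_cofinite[OF assms(1)] True by blast
  then have "infinite (A - ?F)" using assms(2) by (simp add: Diff_infinite_finite)
  moreover have "propagates X B m t (A - ?F)" unfolding propagates_def by blast
  ultimately show ?thesis by blast
next
  case False
  then have "propagates X B m t A" unfolding propagates_def by blast
  then show ?thesis using assms(2) by blast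
qed

lemma rejected_stems:
  assumes "B' \<subseteq> B" and rej: "rejects X k s B" and s: "s \<subseteq> {..<k}"
    and root: "propagates X B k s B'"
    and step: "\<forall>b\<in>B'. \<forall>t\<subseteq>{..b}. propagates X B (Suc b) t (B' \<inter> {b<..})"
    and Z: "Z \<in> nbhd k s B'"
  shows "y \<in> Z \<Longrightarrow> k \<le> y \<Longrightarrow> rejects X (Suc y) (Z \<inter> {..y}) B"
proof (induction y rule: less_induct)
  case (less y)
  have Z_tail: "Z \<inter> {k..} \<subseteq> B'" and Z_stem: "Z \<inter> {..<k} = s" using Z unfolding nbhd_def by auto
  have "y \<in> B' \<inter> B" using less.prems Z_tail \<open>B' \<subseteq> B\<close> by auto
  from less.prems show ?case
  proof (cases rule: segment_cases)
    case 1
    have "rejects X (Suc y) (insert y s) B"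
      using root rej s \<open>y \<in> B' \<inter> B\<close> less.prems(2) unfolding propagates_def by blast
    then show ?thesis using 1 Z_stem by simp
  next
    case (2 y')
    have "y' \<in> B'" using 2 Z_tail by auto
    moreover have "Z \<inter> {..y'} \<subseteq> {..y'}" by blast
    ultimately have "propagates X B (Suc y') (Z \<inter> {..y'}) (B' \<inter> {y'<..})" using step by blast
    moreover have "rejects X (Suc y') (Z \<inter> {..y'}) B" using less.IH 2 by blast
    moreover have "Z \<inter> {..y'} \<subseteq> {..<Suc y'}" by auto
    moreover have "y \<in> B' \<inter> {y'<..} \<inter> B" using \<open>y \<in> B' \<inter> B\<close> 2 by auto
    ultimately have "rejects X (Suc y) (insert y (Z \<inter> {..y'})) B"
      using 2(3) unfolding propagates_def by auto
    then show ?thesis using 2(4) by simp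
  qed
qed

lemma rejecting_subset:
  assumes "decisive X B" and rej: "rejects X k s B" and s: "s \<subseteq> {..<k}" and "infinite B"
  shows "\<exists>B'\<subseteq>B. infinite B' \<and>
           (\<forall>Z\<in>nbhd k s B'. \<forall>y\<in>Z. k \<le> y \<longrightarrow> rejects X (Suc y) (Z \<inter> {..y}) B)"
proof -
  have dense: "\<exists>C\<subseteq>A. infinite C \<and> propagates X B m t C" if "infinite A" for m t A
    using propagates_dense[OF \<open>decisive X B\<close> that] .
  have hered: "propagates X B m t C'" if "propagates X B m t C" "C' \<subseteq> C" "infinite C'" for m t C C'
    using that(1,2) unfolding propagates_def by blast
  have "\<exists>B'\<subseteq>B. infinite B' \<and> (\<forall>t\<subseteq>{..<k}. propagates X B k t B') \<and>
          (\<forall>b\<in>B'. \<forall>t\<subseteq>{..b}. propagates X B (Suc b) t (B' \<inter> {b<..}))"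
    using dense hered \<open>infinite B\<close> by (rule fusion_stems)
  then obtain B' where B': "B' \<subseteq> B" "infinite B'" "propagates X B k s B'"
    "\<forall>b\<in>B'. \<forall>t\<subseteq>{..b}. propagates X B (Suc b) t (B' \<inter> {b<..})"
    using s by blast
  have "rejects X (Suc y) (Z \<inter> {..y}) B" if "Z \<in> nbhd k s B'" "y \<in> Z" "k \<le> y" for Z y
    using rejected_stems[OF B'(1) rej s B'(3,4) that(1)] that(2,3) .
  then show ?thesis using B'(1,2) by blast
qed

lemma rejected_point_not_in_open:
  assumes "ellentuck_open X" "B' \<subseteq> B" "Z \<in> nbhd k s B'"
    and rej: "\<forall>y\<in>Z. k \<le> y \<longrightarrow> rejects X (Suc y) (Z \<inter> {..y}) B"
  shows "Z \<notin> X"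
proof
  assume "Z \<in> X"
  then obtain m t C where C: "Z \<in> nbhd m t C" "nbhd m t C \<subseteq> X"
    using assms(1) unfolding ellentuck_open_def by blast
  have Z: "infinite Z" "Z \<inter> {k..} \<subseteq> B'" "Z \<inter> {m..} \<subseteq> C"
    using assms(3) C(1) unfolding nbhd_def by auto
  obtain y where y: "y \<in> Z" "max k m \<le> y" using Z(1) infinite_nat_iff_unbounded_le by blast
  have "Z \<inter> {max k m..} \<subseteq> B' \<inter> C" using Z by auto
  then have "infinite (B' \<inter> C)" using infinite_Int_atLeast[OF Z(1)] finite_subset by blast
  moreover have "nbhd (Suc y) (Z \<inter> {..y}) (B' \<inter> C) \<subseteq> X"
    using nbhd_refine[OF C(1), of "Suc y" "B' \<inter> C"] C(2) y(2) by (auto simp: lessThan_Suc_atMost)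
  moreover have "B' \<inter> C \<subseteq> B" using assms(2) by blast
  moreover have "rejects X (Suc y) (Z \<inter> {..y}) B" using rej y by auto
  ultimately show False unfolding rejects_def by blast
qed

theorem ellentuck_open_completely_ramsey:
  assumes "ellentuck_open X"
  shows "completely_ramsey X"
  unfolding completely_ramsey_def
proof (intro allI impI)
  fix k s A assume "infinite (A::nat set)"
  then obtain B where B: "B \<subseteq> A" "infinite B" "\<forall>t\<subseteq>{..<k}. decides X k t B" "decisive X B"
    using decisive_subset[where k = k and X = X] by blast
  show "\<exists>B\<subseteq>A. infinite B \<and> (nbhd k s B \<subseteq> X \<or> nbhd k s B \<inter> X = {})"
  proof (cases "s \<subseteq> {..<k} \<and> \<not> nbhd k s B \<subseteq> X")
    case True
    then have "rejects X k s B" using B(3) unfolding decides_def by blast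
    then obtain B' where B': "B' \<subseteq> B" "infinite B'"
      "\<forall>Z\<in>nbhd k s B'. \<forall>y\<in>Z. k \<le> y \<longrightarrow> rejects X (Suc y) (Z \<inter> {..y}) B"
      using rejecting_subset[OF B(4)] True B(2) by blast
    have "Z \<notin> X" if "Z \<in> nbhd k s B'" for Z
      using rejected_point_not_in_open[OF assms B'(1) that] B'(3) that by blast
    then have "nbhd k s B' \<inter> X = {}" by blast
    then show ?thesis using B(1) B'(1,2) by (meson order_trans)
  next
    case False
    then have "nbhd k s B = {} \<or> nbhd k s B \<subseteq> X" unfolding nbhd_def by auto
    then show ?thesis using B(1,2) by blast
  qed
qed

lemma completely_ramsey_empty: "completely_ramsey {}"
  unfolding completely_ramsey_def by blast

lemma completely_ramsey_compl:
  assumes "completely_ramsey X"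
  shows "completely_ramsey (Pinf UNIV - X)"
  unfolding completely_ramsey_def
proof (intro allI impI)
  fix m t A assume "infinite (A::nat set)"
  then obtain B where "B \<subseteq> A" "infinite B" "nbhd m t B \<subseteq> X \<or> nbhd m t B \<inter> X = {}"
    using assms unfolding completely_ramsey_def by blast
  then show "\<exists>B\<subseteq>A. infinite B \<and> (nbhd m t B \<subseteq> Pinf UNIV - X \<or> nbhd m t B \<inter> (Pinf UNIV - X) = {})"
    using nbhd_subset_Pinf by blast
qed

lemma completely_ramsey_sandwich:
  assumes H: "completely_ramsey H" and R: "ramsey_null R"
    and lower: "H - R \<subseteq> X" and upper: "X \<subseteq> H \<union> R"
  shows "completely_ramsey X"
  unfolding completely_ramsey_def
proof (intro allI impI)
  fix m t A assume "infinite (A::nat set)"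
  then obtain B1 where B1: "B1 \<subseteq> A" "infinite B1" "nbhd m t B1 \<inter> R = {}"
    using R unfolding ramsey_null_def by blast
  obtain B2 where B2: "B2 \<subseteq> B1" "infinite B2" "nbhd m t B2 \<subseteq> H \<or> nbhd m t B2 \<inter> H = {}"
    using H B1(2) unfolding completely_ramsey_def by blast
  have "nbhd m t B2 \<inter> R = {}" using B1(3) nbhd_mono[OF B2(1)] by blast
  then have "nbhd m t B2 \<subseteq> X \<or> nbhd m t B2 \<inter> X = {}"
    using B2(3) lower upper by (elim disjE) blast+
  then show "\<exists>B\<subseteq>A. infinite B \<and> (nbhd m t B \<subseteq> X \<or> nbhd m t B \<inter> X = {})"
    using B1(1) B2(1,2) by (meson order_trans)
qed

definition ellentuck_interior :: "nat set set \<Rightarrow> nat set set" where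
  "ellentuck_interior X = {Z. \<exists>m t B. Z \<in> nbhd m t B \<and> nbhd m t B \<subseteq> X}"

lemma ellentuck_open_interior: "ellentuck_open (ellentuck_interior X)"
  unfolding ellentuck_open_def ellentuck_interior_def by blast

lemma ellentuck_interior_subset: "ellentuck_interior X \<subseteq> X"
  unfolding ellentuck_interior_def by blast

lemma ellentuck_open_UN:
  assumes "\<And>n::nat. ellentuck_open (U n)"
  shows "ellentuck_open (\<Union>n. U n)"
  unfolding ellentuck_open_def
proof
  fix Z assume "Z \<in> (\<Union>n. U n)"
  then obtain n where "Z \<in> U n" by blast
  then obtain m t B where "Z \<in> nbhd m t B" "nbhd m t B \<subseteq> U n"
    using assms unfolding ellentuck_open_def by blast
  then show "\<exists>m t B. Z \<in> nbhd m t B \<and> nbhd m t B \<subseteq> (\<Union>n. U n)" by blast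
qed

lemma ramsey_null_minus_interior:
  assumes "completely_ramsey X"
  shows "ramsey_null (X - ellentuck_interior X)"
  unfolding ramsey_null_def
proof (intro allI impI)
  fix m t A assume "infinite (A::nat set)"
  then obtain B where B: "B \<subseteq> A" "infinite B" "nbhd m t B \<subseteq> X \<or> nbhd m t B \<inter> X = {}"
    using assms unfolding completely_ramsey_def by blast
  have "nbhd m t B \<inter> (X - ellentuck_interior X) = {}"
  proof (cases "nbhd m t B \<subseteq> X")
    case True
    then have "nbhd m t B \<subseteq> ellentuck_interior X" unfolding ellentuck_interior_def by blast
    then show ?thesis by blast
  qed (use B(3) in blast)
  then show "\<exists>B\<subseteq>A. infinite B \<and> nbhd m t B \<inter> (X - ellentuck_interior X) = {}"
    using B(1,2) by blast
qed

lemma completely_ramsey_UN: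
  fixes X :: "nat \<Rightarrow> nat set set"
  assumes "\<And>n. completely_ramsey (X n)"
  shows "completely_ramsey (\<Union>n. X n)"
proof (rule completely_ramsey_sandwich)
  show "completely_ramsey (\<Union>n. ellentuck_interior (X n))"
    by (intro ellentuck_open_completely_ramsey ellentuck_open_UN ellentuck_open_interior)
  show "ramsey_null (\<Union>n. X n - ellentuck_interior (X n))"
    by (intro ramsey_null_UN ramsey_null_minus_interior assms)
  have "ellentuck_interior (X n) \<subseteq> X n" for n by (rule ellentuck_interior_subset)
  then show "(\<Union>n. ellentuck_interior (X n)) - (\<Union>n. X n - ellentuck_interior (X n)) \<subseteq> (\<Union>n. X n)"
    by blast
  show "(\<Union>n. X n) \<subseteq> (\<Union>n. ellentuck_interior (X n)) \<union> (\<Union>n. X n - ellentuck_interior (X n))"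
    by blast
qed

definition ramsey_measurable :: "nat set set \<Rightarrow> bool" where
  "ramsey_measurable X \<longleftrightarrow> X \<subseteq> Pinf UNIV \<and> completely_ramsey X"

lemma ramsey_measurable_compl: "ramsey_measurable X \<Longrightarrow> ramsey_measurable (Pinf UNIV - X)"
  unfolding ramsey_measurable_def using completely_ramsey_compl by blast

lemma ramsey_measurable_UN: "(\<And>n::nat. ramsey_measurable (X n)) \<Longrightarrow> ramsey_measurable (\<Union>n. X n)"
  unfolding ramsey_measurable_def using completely_ramsey_UN by blast

lemma ramsey_measurable_Pinf: "ramsey_measurable (Pinf UNIV)"
  using ramsey_measurable_compl[of "{}"] completely_ramsey_empty
  by (simp add: ramsey_measurable_def)

lemma ramsey_measurable_Int:
  assumes "ramsey_measurable X" "ramsey_measurable Y"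
  shows "ramsey_measurable (X \<inter> Y)"
proof -
  let ?U = "\<lambda>n::nat. if n = 0 then Pinf UNIV - X else Pinf UNIV - Y"
  have "X \<inter> Y = Pinf UNIV - (\<Union>n. ?U n)"
    using assms unfolding ramsey_measurable_def by (auto split: if_splits)
  moreover have "ramsey_measurable (Pinf UNIV - (\<Union>n. ?U n))"
    by (intro ramsey_measurable_compl ramsey_measurable_UN) (simp add: assms ramsey_measurable_compl)
  ultimately show ?thesis by simp
qed

lemma ramsey_measurable_Diff:
  assumes "ramsey_measurable X" "ramsey_measurable Y"
  shows "ramsey_measurable (X - Y)"
proof -
  have "X - Y = X \<inter> (Pinf UNIV - Y)" using assms unfolding ramsey_measurable_def by blast
  then show ?thesis by (simp add: assms ramsey_measurable_Int ramsey_measurable_compl)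
qed

definition ellentuck_hull :: "nat set set \<Rightarrow> nat set set" where
  "ellentuck_hull X = Pinf UNIV - ellentuck_interior (Pinf UNIV - X)"

lemma ramsey_measurable_hull: "ramsey_measurable (ellentuck_hull X)"
proof -
  have "ramsey_measurable (ellentuck_interior (Pinf UNIV - X))"
    using ellentuck_open_completely_ramsey[OF ellentuck_open_interior]
      ellentuck_interior_subset[of "Pinf UNIV - X"]
    unfolding ramsey_measurable_def by blast
  then show ?thesis unfolding ellentuck_hull_def by (rule ramsey_measurable_compl)
qed

lemma subset_ellentuck_hull: "X \<subseteq> Pinf UNIV \<Longrightarrow> X \<subseteq> ellentuck_hull X"
  unfolding ellentuck_hull_def ellentuck_interior_def by blast

lemma ramsey_null_within_hull:
  assumes "completely_ramsey Y" "Y \<subseteq> ellentuck_hull X - X"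
  shows "ramsey_null Y"
  unfolding ramsey_null_def
proof (intro allI impI)
  fix m t A assume "infinite (A::nat set)"
  then obtain B where B: "B \<subseteq> A" "infinite B" "nbhd m t B \<subseteq> Y \<or> nbhd m t B \<inter> Y = {}"
    using assms(1) unfolding completely_ramsey_def by blast
  have "nbhd m t B = {}" if "nbhd m t B \<subseteq> Y"
  proof -
    have "nbhd m t B \<subseteq> Pinf UNIV - X" using that assms(2) nbhd_subset_Pinf by blast
    then have "nbhd m t B \<subseteq> ellentuck_interior (Pinf UNIV - X)"
      unfolding ellentuck_interior_def by blast
    then show ?thesis using that assms(2) unfolding ellentuck_hull_def by blast
  qed
  then show "\<exists>B\<subseteq>A. infinite B \<and> nbhd m t B \<inter> Y = {}" using B by blast
qed

definition souslin_from :: "(nat list \<Rightarrow> 'a set) \<Rightarrow> nat list \<Rightarrow> 'a set" where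
  "souslin_from P u = {Z. \<exists>\<sigma>. map \<sigma> [0..<length u] = u \<and> (\<forall>n. Z \<in> P (map \<sigma> [0..<Suc n]))}"

lemma souslin_from_Nil: "souslin_from P [] = souslin P"
  unfolding souslin_from_def souslin_def by auto

lemma souslin_from_subset_souslin: "souslin_from P u \<subseteq> souslin P"
  unfolding souslin_from_def souslin_def by blast

lemma souslin_from_subset_scheme:
  assumes "u \<noteq> []"
  shows "souslin_from P u \<subseteq> P u"
proof
  fix Z assume "Z \<in> souslin_from P u"
  then obtain \<sigma> where \<sigma>: "map \<sigma> [0..<length u] = u" "\<forall>n. Z \<in> P (map \<sigma> [0..<Suc n])"
    unfolding souslin_from_def by blast
  have "Suc (length u - 1) = length u" using assms by simp
  then have "Z \<in> P (map \<sigma> [0..<length u])" using \<sigma>(2) by metis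
  then show "Z \<in> P u" using \<sigma>(1) by simp
qed

lemma souslin_from_split: "souslin_from P u \<subseteq> (\<Union>i. souslin_from P (u @ [i]))"
proof
  fix Z assume "Z \<in> souslin_from P u"
  then obtain \<sigma> where \<sigma>: "map \<sigma> [0..<length u] = u" "\<forall>n. Z \<in> P (map \<sigma> [0..<Suc n])"
    unfolding souslin_from_def by blast
  then have "map \<sigma> [0..<length (u @ [\<sigma> (length u)])] = u @ [\<sigma> (length u)]" by simp
  then have "Z \<in> souslin_from P (u @ [\<sigma> (length u)])" using \<sigma>(2) unfolding souslin_from_def by blast
  then show "Z \<in> (\<Union>i. souslin_from P (u @ [i]))" by blast
qed

lemma souslin_branch:
  assumes root: "Z \<in> H []" and extend: "\<And>u. Z \<in> H u \<Longrightarrow> \<exists>i. Z \<in> H (u @ [i])"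
    and scheme: "\<And>u. u \<noteq> [] \<Longrightarrow> H u \<subseteq> P u"
  shows "Z \<in> souslin P"
proof -
  define c where "c u = (SOME i. Z \<in> H (u @ [i]))" for u
  have c: "Z \<in> H u \<Longrightarrow> Z \<in> H (u @ [c u])" for u
    unfolding c_def using extend by (rule someI_ex)
  define path where "path n = ((\<lambda>u. u @ [c u]) ^^ n) []" for n
  define \<sigma> where "\<sigma> i = c (path i)" for i
  have path: "path n = map \<sigma> [0..<n]" for n
    by (induction n) (simp_all add: path_def \<sigma>_def)
  have in_H: "Z \<in> H (path n)" for n
    by (induction n) (use root c in \<open>simp_all add: path_def\<close>)
  have "Z \<in> P (map \<sigma> [0..<Suc n])" for n
  proof -
    have "Z \<in> H (map \<sigma> [0..<Suc n])" using in_H[of "Suc n"] by (simp only: path)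
    moreover have "map \<sigma> [0..<Suc n] \<noteq> []" by simp
    ultimately show ?thesis using scheme by blast
  qed
  then show ?thesis unfolding souslin_def by blast
qed

lemma souslin_subset: "(\<And>s. P s \<subseteq> Y) \<Longrightarrow> souslin P \<subseteq> Y"
  unfolding souslin_def by blast

lemma ramsey_null_hull_gap:
  fixes S H :: "nat list \<Rightarrow> nat set set"
  assumes meas: "\<And>v. ramsey_measurable (H v)" and S_H: "\<And>v. S v \<subseteq> H v"
    and H_hull: "H u \<subseteq> ellentuck_hull (S u)" and split: "S u \<subseteq> (\<Union>i. S (u @ [i]))"
  shows "ramsey_null (H u - (\<Union>i. H (u @ [i])))"
proof (rule ramsey_null_within_hull)
  have "ramsey_measurable (H u - (\<Union>i. H (u @ [i])))"
    by (intro ramsey_measurable_Diff ramsey_measurable_UN meas)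
  then show "completely_ramsey (H u - (\<Union>i. H (u @ [i])))" unfolding ramsey_measurable_def by blast
  have "S u \<subseteq> (\<Union>i. H (u @ [i]))" using split S_H by blast
  then show "H u - (\<Union>i. H (u @ [i])) \<subseteq> ellentuck_hull (S u) - S u" using H_hull by blast
qed

(* H u, the hull of the part through u cut down to
   P u, is measurable; outside the Ramsey null union of the gaps H u - (UN i. H (u @ [i]))
   every point of H [] follows a branch, so the Souslin set is sandwiched. *)
lemma ramsey_measurable_souslin:
  fixes P :: "nat list \<Rightarrow> nat set set"
  assumes meas: "\<And>s. ramsey_measurable (P s)"
  shows "ramsey_measurable (souslin P)"
proof -
  let ?S = "souslin_from P"
  have "souslin P \<subseteq> Pinf UNIV"
    using meas unfolding ramsey_measurable_def by (intro souslin_subset) blast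
  then have S_Pinf: "?S u \<subseteq> Pinf UNIV" for u
    using souslin_from_subset_souslin[of P u] by (rule subset_trans[rotated])
  define Q where "Q u = (if u = [] then Pinf UNIV else P u)" for u
  define H where "H u = ellentuck_hull (?S u) \<inter> Q u" for u
  have H_meas: "ramsey_measurable (H u)" for u
    unfolding H_def Q_def
    by (simp add: ramsey_measurable_Int ramsey_measurable_hull meas ramsey_measurable_Pinf)
  have S_H: "?S u \<subseteq> H u" for u
  proof -
    have "?S u \<subseteq> ellentuck_hull (?S u)" by (rule subset_ellentuck_hull[OF S_Pinf])
    moreover have "?S u \<subseteq> Q u"
      using S_Pinf[of u] souslin_from_subset_scheme[of u P] unfolding Q_def by auto
    ultimately show ?thesis unfolding H_def by (rule Int_greatest)
  qed
  define D where "D u = H u - (\<Union>i. H (u @ [i]))" for u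
  have "ramsey_null (D u)" for u
    unfolding D_def
    by (rule ramsey_null_hull_gap[where S = "souslin_from P" and H = H and u = u,
          OF H_meas S_H _ souslin_from_split]) (simp add: H_def)
  then have null: "ramsey_null (\<Union>n. D (from_nat n))" by (intro ramsey_null_UN)
  have "Z \<in> souslin P" if Z: "Z \<in> H []" "Z \<notin> (\<Union>n. D (from_nat n))" for Z
  proof (rule souslin_branch)
    show "Z \<in> H []" by (rule Z(1))
    show "\<exists>i. Z \<in> H (u @ [i])" if "Z \<in> H u" for u
    proof -
      have "Z \<notin> D (from_nat (to_nat u))" using Z(2) by blast
      then show ?thesis using that unfolding D_def by simp
    qed
    show "H u \<subseteq> P u" if "u \<noteq> []" for u unfolding H_def Q_def using that by simp
  qed
  then have "H [] - (\<Union>n. D (from_nat n)) \<subseteq> souslin P" by blast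
  moreover have "souslin P \<subseteq> H []" using S_H[of "[]"] by (simp add: souslin_from_Nil)
  ultimately have "completely_ramsey (souslin P)"
    using completely_ramsey_sandwich[OF _ null] H_meas[of "[]"]
    unfolding ramsey_measurable_def by blast
  then show ?thesis using \<open>souslin P \<subseteq> Pinf UNIV\<close> unfolding ramsey_measurable_def by blast
qed

abbreviation enum :: "nat set \<Rightarrow> nat \<Rightarrow> nat" where
  "enum \<equiv> Infinite_Set.enumerate"

lemma Least_eq_below:
  fixes K :: nat
  assumes "P x" "(LEAST y. P y) < K" "\<And>y. y < K \<Longrightarrow> P y \<longleftrightarrow> Q y"
  shows "(LEAST y. Q y) = (LEAST y. P y)"
proof (rule Least_equality)
  have "P (LEAST y. P y)" using assms(1) by (rule LeastI)
  then show "Q (LEAST y. P y)" using assms(2,3) by blast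
  show "(LEAST y. P y) \<le> y" if "Q y" for y
  proof (rule ccontr)
    assume "\<not> (LEAST y. P y) \<le> y"
    then have "P y" using that assms(2,3) by auto
    then show False using Least_le[of P y] \<open>\<not> (LEAST y. P y) \<le> y\<close> by simp
  qed
qed

lemma enumerate_agree_below:
  fixes S S' :: "nat set"
  assumes S: "infinite S" and S': "infinite S'" and agree: "\<And>y. y < K \<Longrightarrow> y \<in> S \<longleftrightarrow> y \<in> S'"
  shows "enum S j < K \<Longrightarrow> enum S' j = enum S j"
proof (induction j)
  case 0
  have "(LEAST y. y \<in> S') = (LEAST y. y \<in> S)"
  proof (rule Least_eq_below)
    show "enum S 0 \<in> S" by (rule enumerate_in_set[OF S])
    show "(LEAST y. y \<in> S) < K" using 0 by (simp only: enumerate_0)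
  qed (use agree in blast)
  then show ?case by (simp only: enumerate_0)
next
  case (Suc j)
  have step: "enum S j < enum S (Suc j)" by (rule enumerate_step[OF S])
  then have IH: "enum S' j = enum S j" using Suc by simp
  have "enum S' (Suc j) = (LEAST y. y \<in> S' \<and> enum S' j < y)" by (rule enumerate_Suc''[OF S'])
  also have "\<dots> = (LEAST y. y \<in> S \<and> enum S j < y)"
  proof (rule Least_eq_below)
    show "enum S (Suc j) \<in> S \<and> enum S j < enum S (Suc j)"
      using enumerate_in_set[OF S] step by (rule conjI)
    show "(LEAST y. y \<in> S \<and> enum S j < y) < K"
      using Suc.prems by (simp only: enumerate_Suc''[OF S])
  qed (simp add: agree IH)
  also have "\<dots> = enum S (Suc j)" by (rule enumerate_Suc''[OF S, symmetric])
  finally show ?case .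
qed

lemma enumerate_range_strict_mono:
  assumes f: "strict_mono (f :: nat \<Rightarrow> nat)"
  shows "enum (range f) n = f n"
proof (induction n)
  case 0
  have "(LEAST x. x \<in> range f) = f 0"
    by (rule Least_equality) (auto simp: strict_mono_less_eq[OF f])
  then show ?case by (simp add: enumerate_0)
next
  case (Suc n)
  have "infinite (range f)" using f strict_mono_imp_inj_on range_inj_infinite by blast
  have "(LEAST y. y \<in> range f \<and> f n < y) = f (Suc n)"
    by (rule Least_equality) (auto simp: strict_mono_less[OF f] strict_mono_less_eq[OF f] Suc_le_eq)
  then show ?case using enumerate_Suc''[OF \<open>infinite (range f)\<close>] Suc.IH by simp
qed

lemma Pinf_open_initial_segment:
  assumes "Pinf_open U" "Z \<in> U"
  shows "\<exists>n. \<forall>W\<in>Pinf UNIV. W \<inter> {..<n} = Z \<inter> {..<n} \<longrightarrow> W \<in> U"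
proof -
  obtain V :: "(nat \<Rightarrow> bool) set" where V: "open V" "U = {A \<in> Pinf UNIV. (\<lambda>n. n \<in> A) \<in> V}"
    using assms(1) unfolding Pinf_open_def by blast
  have Z_V: "(\<lambda>n. n \<in> Z) \<in> V" using assms(2) V(2) by blast
  have "openin (product_topology (\<lambda>i. euclidean) UNIV) V" using V(1) unfolding open_fun_def .
  from product_topology_open_contains_basis[OF this Z_V]
  obtain X :: "nat \<Rightarrow> bool set" where X: "(\<lambda>n. n \<in> Z) \<in> Pi\<^sub>E UNIV X"
     "finite {i. X i \<noteq> topspace euclidean}" "Pi\<^sub>E UNIV X \<subseteq> V"
    by blast
  obtain n where n: "\<And>i. X i \<noteq> UNIV \<Longrightarrow> i < n"
    using X(2) finite_nat_set_iff_bounded by auto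
  have "W \<in> U" if W: "W \<in> Pinf UNIV" "W \<inter> {..<n} = Z \<inter> {..<n}" for W
  proof -
    have "(i \<in> W) \<in> X i" for i
    proof (cases "i < n")
      case True
      then have "(i \<in> W) = (i \<in> Z)" using W(2) by blast
      then show ?thesis using X(1) by (simp add: PiE_iff)
    next
      case False
      then show ?thesis using n by fastforce
    qed
    then have "(\<lambda>i. i \<in> W) \<in> V" using X(3) by (auto simp: PiE_iff)
    then show "W \<in> U" using W(1) V(2) by blast
  qed
  then show ?thesis by blast
qed

definition delta_point :: "(nat \<Rightarrow> nat set) \<Rightarrow> nat set \<Rightarrow> nat \<Rightarrow> nat" where
  "delta_point C M i = enum (C (enum M (2*i))) (enum M (2*i+1))"

lemma Delta_eq_range: "Delta C M = range (delta_point C M)"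
  unfolding Delta_def delta_point_def by simp

lemma delta_point_ge:
  assumes "infinite M" "\<And>n. infinite (C n)"
  shows "2*i+1 \<le> delta_point C M i"
proof -
  have "2*i+1 \<le> enum M (2*i+1)" by (rule le_enumerate[OF assms(1)])
  also have "\<dots> \<le> delta_point C M i" unfolding delta_point_def by (rule le_enumerate[OF assms(2)])
  finally show ?thesis .
qed

(* For disjoint infinite C n, Delta_C(M) is infinite since its points lie in distinct C n. *)
lemma Delta_infinite:
  assumes M: "infinite M" and Cinf: "\<And>n. infinite (C n)"
    and disj: "\<And>i j. i \<noteq> j \<Longrightarrow> C i \<inter> C j = {}"
  shows "infinite (Delta C M)"
proof -
  have mem: "delta_point C M i \<in> C (enum M (2*i))" for i
    unfolding delta_point_def by (rule enumerate_in_set[OF Cinf])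
  have "inj (delta_point C M)"
  proof (rule injI)
    fix i j assume eq: "delta_point C M i = delta_point C M j"
    show "i = j"
    proof (rule ccontr)
      assume "i \<noteq> j"
      then have "enum M (2*i) \<noteq> enum M (2*j)" using inj_eq[OF inj_enumerate[OF M]] by simp
      then have "C (enum M (2*i)) \<inter> C (enum M (2*j)) = {}" by (rule disj)
      then show False using mem[of i] mem[of j] eq by auto
    qed
  qed
  then show ?thesis unfolding Delta_eq_range by (rule range_inj_infinite)
qed

lemma Delta_initial_segment:
  assumes "infinite M" "\<And>n. infinite (C n)"
  shows "Delta C M \<inter> {..<n} = delta_point C M ` {..<n} \<inter> {..<n}"
proof -
  have "i < n" if "delta_point C M i < n" for i
    using delta_point_ge[of M C i, OF assms] that by simp
  then show ?thesis unfolding Delta_eq_range by blast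
qed

(* Continuity of Delta_C: the first n points of Delta_C(M) only depend on M below
   l_(2n) + 1, so the preimage of an open family is Ellentuck-open. *)
lemma Delta_preimage_open:
  assumes Cinf: "\<And>n. infinite (C n)" and disj: "\<And>i j. i \<noteq> j \<Longrightarrow> C i \<inter> C j = {}"
    and U: "Pinf_open U"
  shows "ellentuck_open {M \<in> Pinf UNIV. Delta C M \<in> U}"
  unfolding ellentuck_open_def
proof
  fix M assume "M \<in> {M \<in> Pinf UNIV. Delta C M \<in> U}"
  then have M: "infinite M" "Delta C M \<in> U" unfolding Pinf_def by auto
  obtain n where n: "\<And>W. W \<in> Pinf UNIV \<Longrightarrow> W \<inter> {..<n} = Delta C M \<inter> {..<n} \<Longrightarrow> W \<in> U"
    using Pinf_open_initial_segment[OF U M(2)] by blast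
  define K where "K = Suc (enum M (2*n))"
  have "M' \<in> Pinf UNIV \<and> Delta C M' \<in> U" if "M' \<in> nbhd K (M \<inter> {..<K}) UNIV" for M'
  proof -
    have M': "infinite M'" "M' \<inter> {..<K} = M \<inter> {..<K}" using that unfolding nbhd_def by auto
    have "y \<in> M \<longleftrightarrow> y \<in> M'" if "y < K" for y
      using M'(2) that by (auto simp: set_eq_iff)
    then have agree: "enum M' j = enum M j" if "j \<le> 2*n" for j
      using enumerate_agree_below[of M M' K j] M(1) M'(1) that unfolding K_def
      by (simp add: le_imp_less_Suc)
    have "delta_point C M' i = delta_point C M i" if "i < n" for i
      using agree that unfolding delta_point_def by simp
    then have "Delta C M' \<inter> {..<n} = Delta C M \<inter> {..<n}"
      using Delta_initial_segment[of M' C, OF M'(1) Cinf] Delta_initial_segment[of M C, OF M(1) Cinf] by simp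
    moreover have "Delta C M' \<in> Pinf UNIV"
      using Delta_infinite[of M' C, OF M'(1) Cinf disj] unfolding Pinf_def by simp
    ultimately show ?thesis using n M'(1) unfolding Pinf_def by simp
  qed
  moreover have "M \<in> nbhd K (M \<inter> {..<K}) UNIV" using M(1) unfolding nbhd_def by simp
  ultimately show "\<exists>m t B. M \<in> nbhd m t B \<and> nbhd m t B \<subseteq> {M \<in> Pinf UNIV. Delta C M \<in> U}"
    by blast
qed

lemma Delta_preimage_measurable:
  assumes Cinf: "\<And>n. infinite (C n)" and disj: "\<And>i j. i \<noteq> j \<Longrightarrow> C i \<inter> C j = {}"
  shows "X \<in> C_sets (Pinf UNIV) Pinf_open \<Longrightarrow> ramsey_measurable {M \<in> Pinf UNIV. Delta C M \<in> X}"
proof (induction rule: C_sets.induct)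
  case (C_open U)
  then show ?case
    using ellentuck_open_completely_ramsey[OF Delta_preimage_open[where C = C, OF Cinf disj]]
    unfolding ramsey_measurable_def by blast
next
  case (C_compl A)
  have "Delta C M \<in> Pinf UNIV" if "M \<in> Pinf UNIV" for M
    using Delta_infinite[of _ C, OF _ Cinf disj] that unfolding Pinf_def by simp
  then have "{M \<in> Pinf UNIV. Delta C M \<in> Pinf UNIV - A} = Pinf UNIV - {M \<in> Pinf UNIV. Delta C M \<in> A}"
    by blast
  then show ?case using ramsey_measurable_compl[OF C_compl.IH] by simp
next
  case (C_union A)
  have "{M \<in> Pinf UNIV. Delta C M \<in> (\<Union>n. A n)} = (\<Union>n. {M \<in> Pinf UNIV. Delta C M \<in> A n})" by blast
  then show ?case using ramsey_measurable_UN[OF C_union.IH] by simp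
next
  case (C_souslin P)
  have "{M \<in> Pinf UNIV. Delta C M \<in> souslin P} = souslin (\<lambda>s. {M \<in> Pinf UNIV. Delta C M \<in> P s})"
    unfolding souslin_def by blast
  then show ?case using ramsey_measurable_souslin[OF C_souslin.IH] by simp
qed

lemma interleaved_pairs:
  assumes "\<And>b. \<exists>p q. b < p \<and> p < q \<and> R p q"
  shows "\<exists>f::nat \<Rightarrow> nat. strict_mono f \<and> (\<forall>i. R (f (2*i)) (f (2*i+1)))"
proof -
  define g where "g b = (SOME pq. b < fst pq \<and> fst pq < snd pq \<and> R (fst pq) (snd pq))" for b
  have g: "b < fst (g b) \<and> fst (g b) < snd (g b) \<and> R (fst (g b)) (snd (g b))" for b
  proof -
    obtain p q where "b < p \<and> p < q \<and> R p q" using assms by blast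
    then have "\<exists>pq. b < fst pq \<and> fst pq < snd pq \<and> R (fst pq) (snd pq)" by (intro exI[of _ "(p, q)"]) simp
    then show ?thesis unfolding g_def by (rule someI_ex)
  qed
  define pq where "pq k = ((g \<circ> snd) ^^ k) (g 0)" for k
  have pq_Suc: "pq (Suc k) = g (snd (pq k))" for k unfolding pq_def by simp
  have pq_pair: "fst (pq k) < snd (pq k) \<and> R (fst (pq k)) (snd (pq k))" for k
    using g by (cases k) (simp_all add: pq_def)
  define f where "f m = (if even m then fst (pq (m div 2)) else snd (pq (m div 2)))" for m
  have "f m < f (Suc m)" for m
  proof (cases "even m")
    case True
    then have "Suc m div 2 = m div 2" by presburger
    then show ?thesis unfolding f_def using True pq_pair by simp
  next
    case False
    then have "Suc m div 2 = Suc (m div 2)" by presburger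
    then show ?thesis unfolding f_def using False pq_Suc g by simp
  qed
  then have "strict_mono f" by (simp add: strict_mono_Suc_iff)
  moreover have "f (2*i) = fst (pq i)" "f (2*i+1) = snd (pq i)" for i unfolding f_def by simp_all
  ultimately show ?thesis using pq_pair by metis
qed

lemma M_family_Pinf: "M_family \<A> \<Longrightarrow> \<A> \<subseteq> Pinf UNIV"
  unfolding M_family_def by (rule conjunct1)

lemma M_family_hereditary: "M_family \<A> \<Longrightarrow> A \<in> \<A> \<Longrightarrow> B \<subseteq> A \<Longrightarrow> infinite B \<Longrightarrow> B \<in> \<A>"
  unfolding M_family_def by simp

lemma M_family_diagonal:
  fixes As :: "nat \<Rightarrow> nat set"
  assumes "M_family \<A>" "\<And>n. As n \<in> \<A>"
  shows "\<exists>A\<in>\<A>. \<forall>n. finite (A - (\<Union>i\<in>{n..}. As i))"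
proof -
  have "\<forall>As :: nat \<Rightarrow> nat set. (\<forall>n. As n \<in> \<A>) \<longrightarrow> (\<exists>A\<in>\<A>. \<forall>n. finite (A - (\<Union>i\<in>{n..}. As i)))"
    using assms(1) unfolding M_family_def by (elim conjE)
  then have "(\<forall>n. As n \<in> \<A>) \<longrightarrow> (\<exists>A\<in>\<A>. \<forall>n. finite (A - (\<Union>i\<in>{n..}. As i)))"
    by (rule spec)
  moreover have "\<forall>n. As n \<in> \<A>" using assms(2) by (rule allI)
  ultimately show ?thesis by (rule mp)
qed

(* Inside every infinite L, one member A of an M-family contains points x^p_q with
   p < q in L above any bound: A is a diagonal set for the families
   {x^(l_i)_j : j in L, j > l_i}, which all lie in the family. *)
lemma M_family_pairs:
  assumes MF: "M_family \<A>" and C: "\<And>n. C n \<in> \<A>" and L: "infinite L"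
  shows "\<exists>A\<in>\<A>. \<forall>b. \<exists>p q. b < p \<and> p < q \<and> p \<in> L \<and> q \<in> L \<and> enum (C p) q \<in> A"
proof -
  have Cinf: "infinite (C n)" for n using C[of n] M_family_Pinf[OF MF] unfolding Pinf_def by blast
  define As where "As i = enum (C (enum L i)) ` (L \<inter> {enum L i<..})" for i
  have "As i \<in> \<A>" for i
  proof (rule M_family_hereditary[OF MF C])
    show "As i \<subseteq> C (enum L i)" unfolding As_def using enumerate_in_set[OF Cinf] by blast
    have "inj_on (enum (C (enum L i))) (L \<inter> {enum L i<..})"
      using inj_enumerate[OF Cinf] by (rule inj_on_subset) simp
    then show "infinite (As i)" unfolding As_def
      using infinite_Int_greaterThan[OF L] finite_image_iff by blast
  qed
  then obtain A where A: "A \<in> \<A>" "\<And>n. finite (A - (\<Union>i\<in>{n..}. As i))"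
    using M_family_diagonal[OF MF] by blast
  have "infinite A" using A(1) M_family_Pinf[OF MF] unfolding Pinf_def by blast
  have "\<exists>p q. b < p \<and> p < q \<and> p \<in> L \<and> q \<in> L \<and> enum (C p) q \<in> A" for b
  proof -
    have "A - (\<Union>i\<in>{Suc b..}. As i) \<noteq> A" using A(2)[of "Suc b"] \<open>infinite A\<close> by auto
    then have "A \<inter> (\<Union>i\<in>{Suc b..}. As i) \<noteq> {}" by (metis Diff_triv)
    then obtain a i where ai: "a \<in> A" "Suc b \<le> i" "a \<in> As i" by auto
    then obtain q where q: "q \<in> L" "enum L i < q" "a = enum (C (enum L i)) q" unfolding As_def by blast
    have "i \<le> enum L i" by (rule le_enumerate[OF L])
    then show ?thesis using ai q enumerate_in_set[OF L, of i] by (intro exI[of _ "enum L i"] exI[of _ q]) auto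
  qed
  then show ?thesis using A(1) by blast
qed

(* Every infinite L contains M with Delta_C(M) in the M-family: interleave the pairs of
   the previous lemma into M, so that Delta_C(M) is an infinite subset of A. *)
lemma M_family_Delta_member:
  assumes MF: "M_family \<A>" and C: "\<And>n. C n \<in> \<A>"
    and disj: "\<And>i j. i \<noteq> j \<Longrightarrow> C i \<inter> C j = {}" and L: "infinite L"
  shows "\<exists>M\<subseteq>L. infinite M \<and> Delta C M \<in> \<A>"
proof -
  have Cinf: "infinite (C n)" for n using C[of n] M_family_Pinf[OF MF] unfolding Pinf_def by blast
  obtain A where A: "A \<in> \<A>" "\<forall>b. \<exists>p q. b < p \<and> p < q \<and> p \<in> L \<and> q \<in> L \<and> enum (C p) q \<in> A"
    using M_family_pairs[of \<A> C L, OF MF C L] by blast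
  then obtain f :: "nat \<Rightarrow> nat" where f: "strict_mono f"
    "\<And>i. f (2*i) \<in> L \<and> f (2*i+1) \<in> L \<and> enum (C (f (2*i))) (f (2*i+1)) \<in> A"
    using interleaved_pairs[of "\<lambda>p q. p \<in> L \<and> q \<in> L \<and> enum (C p) q \<in> A"] by blast
  define M where "M = range f"
  have "M \<subseteq> L"
  proof
    fix x assume "x \<in> M"
    then obtain m where "x = f m" unfolding M_def by blast
    moreover have "m = 2 * (m div 2) \<or> m = 2 * (m div 2) + 1" by presburger
    ultimately show "x \<in> L" using f(2) by metis
  qed
  have "infinite M" unfolding M_def using f(1) strict_mono_imp_inj_on range_inj_infinite by blast
  have "Delta C M \<subseteq> A"
    using f unfolding Delta_eq_range delta_point_def M_def enumerate_range_strict_mono[OF f(1)] by auto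
  moreover have "infinite (Delta C M)" by (rule Delta_infinite[of M C, OF \<open>infinite M\<close> Cinf disj])
  ultimately have "Delta C M \<in> \<A>" by (rule M_family_hereditary[OF MF A(1)])
  then show ?thesis using \<open>M \<subseteq> L\<close> \<open>infinite M\<close> by blast
qed

theorem lemma7:
  fixes \<A> :: "nat set set" and C :: "nat \<Rightarrow> nat set"
  assumes "C_measurable \<A>"
    and "M_family \<A>"
    and "\<And>n. C n \<in> \<A>"
    and "\<And>i j. i \<noteq> j \<Longrightarrow> C i \<inter> C j = {}"
  shows "\<forall>N\<in>Pinf UNIV. \<exists>L\<in>Pinf N. \<forall>M\<in>Pinf L. Delta C M \<in> \<A>"
proof
  fix N :: "nat set" assume "N \<in> Pinf UNIV"
  then have "infinite N" unfolding Pinf_def by simp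
  let ?D = "{M \<in> Pinf UNIV. Delta C M \<in> \<A>}"
  have Cinf: "infinite (C n)" for n
    using assms(3) M_family_Pinf[OF assms(2)] unfolding Pinf_def by blast
  have "\<A> \<in> C_sets (Pinf UNIV) Pinf_open" using assms(1) unfolding C_measurable_def .
  from Delta_preimage_measurable[OF Cinf assms(4) this] have "ramsey_measurable ?D" .
  then have "completely_ramsey ?D" unfolding ramsey_measurable_def by (rule conjunct2)
  from this[unfolded completely_ramsey_def, rule_format, OF \<open>infinite N\<close>]
  have "\<exists>B\<subseteq>N. infinite B \<and> (nbhd 0 {} B \<subseteq> ?D \<or> nbhd 0 {} B \<inter> ?D = {})" .
  then obtain B :: "nat set" where "B \<subseteq> N \<and> infinite B \<and> (Pinf B \<subseteq> ?D \<or> Pinf B \<inter> ?D = {})"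
    unfolding nbhd_empty_stem by (rule exE)
  then have B: "B \<subseteq> N" "infinite B" "Pinf B \<subseteq> ?D \<or> Pinf B \<inter> ?D = {}" by simp_all
  obtain M where "M \<subseteq> B" "infinite M" "Delta C M \<in> \<A>"
    using M_family_Delta_member[of \<A> C B, OF assms(2,3,4) \<open>infinite B\<close>] by blast
  then have "M \<in> Pinf B \<inter> ?D" unfolding Pinf_def by simp
  then have "Pinf B \<subseteq> ?D" using B(3) by blast
  moreover have "B \<in> Pinf N" using B(1,2) unfolding Pinf_def by simp
  ultimately show "\<exists>L\<in>Pinf N. \<forall>M\<in>Pinf L. Delta C M \<in> \<A>" by blast
qed

end
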